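(* Let $I=[r,s]$ be an interval of rounds with $s\ge r$ and let $C$ be an $I$-vertex-stable strongly connected component with $|C|\ge 2$. If $s\ge r+|C|-2$, then $D(C)\le |C|-1$.
   Context: A finite set $\Pi$ of $n\ge2$ processes is given together with an infinite sequence of simple directed graphs $\mathcal{G}^1,\mathcal{G}^2,\dots$ on vertex set $\Pi$ ($\mathcal{G}^t$ is the round-$t$ communication graph). Process $p$ causally influences $q$ in round $t$ if $q=p$ or $(p\to q)\in\mathcal{G}^t$. A causal chain of length $k\ge1$ from $p$ in round $t$ to $q$ is a sequence $p=p_0,\dots,p_k=q$ with $p_i$ causally influencing $p_{i+1}$ in round $t+i$ for $0\le i<k$; the causal distance $d_t(p,q)$ is the minimum length of such a chain ($\infty$ if none). For an interval $I=[r,s]$, a set $C\subseteq\Pi$ is an $I$-vertex-stable strongly connected component if for every $p\in C$ and every round $t\in I$, the vertex set of the strongly connected component of $\mathcal{G}^t$ containing $p$ equals $C$ (the edges may change). Its round-$x$ causal diameter is $D^x(C)=\max_{p,q\in C} d_x(p,q)$, and its causal diameter is $D(C)=\max\{D^x(C): x\in[r,s],\ x+D^x(C)-1\le s\}$ if this set is nonempty, and $D(C)=\infty$ otherwise. *)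

theory Defs
  imports Main "HOL-Library.Extended_Nat"
begin

text \<open>A run is given by a sequence of communication graphs G t (for rounds t \<ge> 1)
  on the finite process type 'p; an edge (p,q) \<in> G t means p \<rightarrow> q in round t.\<close>

definition influences :: "(nat \<Rightarrow> ('p \<times> 'p) set) \<Rightarrow> nat \<Rightarrow> 'p \<Rightarrow> 'p \<Rightarrow> bool" where
  "influences G t p q \<longleftrightarrow> q = p \<or> (p, q) \<in> G t"

definition causal_chain :: "(nat \<Rightarrow> ('p \<times> 'p) set) \<Rightarrow> nat \<Rightarrow> 'p \<Rightarrow> 'p \<Rightarrow> nat \<Rightarrow> bool" where
  "causal_chain G t p q k \<longleftrightarrow> k \<ge> 1 \<and>
     (\<exists>f :: nat \<Rightarrow> 'p. f 0 = p \<and> f k = q \<and> (\<forall>i<k. influences G (t + i) (f i) (f (Suc i))))"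

definition causal_dist :: "(nat \<Rightarrow> ('p \<times> 'p) set) \<Rightarrow> nat \<Rightarrow> 'p \<Rightarrow> 'p \<Rightarrow> enat" where
  "causal_dist G t p q =
     (if \<exists>k. causal_chain G t p q k then enat (LEAST k. causal_chain G t p q k) else \<infinity>)"

definition scc_of :: "('p \<times> 'p) set \<Rightarrow> 'p \<Rightarrow> 'p set" where
  "scc_of E p = {q. (p, q) \<in> E\<^sup>* \<and> (q, p) \<in> E\<^sup>*}"

definition vertex_stable_scc :: "(nat \<Rightarrow> ('p \<times> 'p) set) \<Rightarrow> nat \<Rightarrow> nat \<Rightarrow> 'p set \<Rightarrow> bool" where
  "vertex_stable_scc G r s C \<longleftrightarrow> (\<forall>p\<in>C. \<forall>t\<in>{r..s}. scc_of (G t) p = C)"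

definition causal_diam_at :: "(nat \<Rightarrow> ('p \<times> 'p) set) \<Rightarrow> nat \<Rightarrow> 'p set \<Rightarrow> enat" where
  "causal_diam_at G x C = Max {causal_dist G x p q | p q. p \<in> C \<and> q \<in> C}"

text \<open>Causal diameter D(C) w.r.t. interval [r,s]; the condition x + D^x(C) - 1 \<le> s
  is written x + D^x(C) \<le> s + 1 (equivalent, avoiding truncated subtraction).\<close>
definition causal_diam :: "(nat \<Rightarrow> ('p \<times> 'p) set) \<Rightarrow> nat \<Rightarrow> nat \<Rightarrow> 'p set \<Rightarrow> enat" where
  "causal_diam G r s C =
     (let S = {causal_diam_at G x C | x. x \<in> {r..s} \<and> enat x + causal_diam_at G x C \<le> enat s + 1}
      in if S \<noteq> {} then Max S else \<infinity>)"

end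

theory Submission
  imports Defs
begin

text \<open>Fix a process p of C and a starting round x. Let R_k be the set of processes q for which
  there is a causal chain of length k from p in round x to q (stutter steps allowed). As long as
  the rounds x, ..., x + k stay inside the stability interval, C is a strongly connected component
  of each graph, so while R_k does not cover C some edge leads from R_k \<inter> C to C - R_k; hence
  R_k \<inter> C grows by at least one process per round and covers C after |C| - 1 rounds. This bounds
  D^x(C) for every x \<le> s - |C| + 2; for larger x the side condition x + D^x(C) - 1 \<le> s of the
  definition of D(C) already forces D^x(C) < |C| - 1, and x = r is always admissible.\<close>

definition causal_reach :: "(nat \<Rightarrow> ('p \<times> 'p) set) \<Rightarrow> nat \<Rightarrow> 'p \<Rightarrow> nat \<Rightarrow> 'p set" where
  "causal_reach G t p k =
     {q. \<exists>f :: nat \<Rightarrow> 'p. f 0 = p \<and> f k = q \<and> (\<forall>i<k. influences G (t + i) (f i) (f (Suc i)))}"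

lemma causal_reach_0: "causal_reach G t p 0 = {p}"
  unfolding causal_reach_def by auto

lemma causal_reach_Suc:
  assumes "q \<in> causal_reach G t p k" and "influences G (t + k) q q'"
  shows "q' \<in> causal_reach G t p (Suc k)"
proof -
  obtain f where f: "f 0 = p" "f k = q" "\<forall>i<k. influences G (t + i) (f i) (f (Suc i))"
    using assms(1) unfolding causal_reach_def by auto
  let ?g = "f(Suc k := q')"
  have "\<forall>i<Suc k. influences G (t + i) (?g i) (?g (Suc i))"
    using f(2,3) assms(2) by (auto simp: less_Suc_eq)
  with f(1) show ?thesis
    unfolding causal_reach_def by (intro CollectI exI[of _ ?g]) simp
qed

lemma causal_reach_mono: "causal_reach G t p k \<subseteq> causal_reach G t p (Suc k)"
  using causal_reach_Suc[of _ G t p k] by (auto simp: influences_def)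

lemma causal_chain_iff_causal_reach:
  "causal_chain G t p q k \<longleftrightarrow> k \<ge> 1 \<and> q \<in> causal_reach G t p k"
  unfolding causal_chain_def causal_reach_def by auto

lemma causal_dist_le_if_causal_reach:
  assumes "k \<ge> 1" and "q \<in> causal_reach G t p k"
  shows "causal_dist G t p q \<le> enat k"
proof -
  have "causal_chain G t p q k"
    using assms by (simp add: causal_chain_iff_causal_reach)
  then show ?thesis
    unfolding causal_dist_def by (auto intro: Least_le)
qed

lemma rtrancl_leaves_set:
  assumes "(a, b) \<in> E\<^sup>*" and "a \<in> R" and "b \<notin> R"
  shows "\<exists>u v. (u, v) \<in> E \<and> u \<in> R \<and> v \<notin> R \<and> (a, u) \<in> E\<^sup>* \<and> (v, b) \<in> E\<^sup>*"
  using assms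
proof (induction rule: rtrancl_induct)
  case base
  then show ?case by simp
next
  case (step y z)
  show ?case
  proof (cases "y \<in> R")
    case True
    with step show ?thesis by blast
  next
    case False
    with step obtain u v where "(u, v) \<in> E" "u \<in> R" "v \<notin> R" "(a, u) \<in> E\<^sup>*" "(v, y) \<in> E\<^sup>*"
      by blast
    with step.hyps(2) show ?thesis
      by (meson rtrancl.rtrancl_into_rtrancl)
  qed
qed

lemma scc_edge_leaving_set:
  assumes "p \<in> R" and "b \<in> scc_of E p" and "b \<notin> R"
  obtains u v where "(u, v) \<in> E" and "u \<in> R" and "v \<in> scc_of E p" and "v \<notin> R"
proof -
  have pb: "(p, b) \<in> E\<^sup>*" and bp: "(b, p) \<in> E\<^sup>*"
    using assms(2) unfolding scc_of_def by auto
  obtain u v where uv: "(u, v) \<in> E" "u \<in> R" "v \<notin> R" "(p, u) \<in> E\<^sup>*" "(v, b) \<in> E\<^sup>*"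
    using rtrancl_leaves_set[OF pb assms(1,3)] by blast
  have "(p, v) \<in> E\<^sup>*"
    using uv(4,1) by (rule rtrancl_into_rtrancl)
  moreover have "(v, p) \<in> E\<^sup>*"
    using uv(5) bp by (rule rtrancl_trans)
  ultimately have "v \<in> scc_of E p"
    unfolding scc_of_def by blast
  with uv that show thesis by blast
qed

lemma card_causal_reach_inter_stable_scc:
  fixes G :: "nat \<Rightarrow> ('p::finite \<times> 'p) set"
  assumes stable: "vertex_stable_scc G r s C" and "p \<in> C"
    and rounds: "\<forall>i<k. t + i \<in> {r..s}"
  shows "min (card C) (Suc k) \<le> card (causal_reach G t p k \<inter> C)"
  using rounds
proof (induction k)
  case 0
  with \<open>p \<in> C\<close> show ?case by (simp add: causal_reach_0)
next
  case (Suc k)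
  let ?R = "causal_reach G t p k" and ?R' = "causal_reach G t p (Suc k)"
  have IH: "min (card C) (Suc k) \<le> card (?R \<inter> C)"
    using Suc by simp
  show ?case
  proof (cases "C \<subseteq> ?R")
    case True
    then have "C \<subseteq> ?R' \<inter> C"
      using causal_reach_mono[of G t p k] by blast
    then show ?thesis
      using card_mono[of "?R' \<inter> C" C] by simp
  next
    case False
    then obtain b where b: "b \<in> C" "b \<notin> ?R \<inter> C" by blast
    have scc: "scc_of (G (t + k)) p = C"
      using stable \<open>p \<in> C\<close> Suc.prems unfolding vertex_stable_scc_def by simp
    have "p \<in> ?R \<inter> C"
      using \<open>p \<in> C\<close> unfolding causal_reach_def
      by (auto intro: exI[of _ "\<lambda>_. p"] simp: influences_def)
    then obtain u v where uv: "(u, v) \<in> G (t + k)" "u \<in> ?R \<inter> C" "v \<in> C" "v \<notin> ?R \<inter> C"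
      using scc_edge_leaving_set[of p "?R \<inter> C" b "G (t + k)"] b scc by auto
    have "v \<in> ?R'"
      using causal_reach_Suc[of u G t p k v] uv(1,2) by (simp add: influences_def)
    then have "insert v (?R \<inter> C) \<subseteq> ?R' \<inter> C"
      using uv(3) causal_reach_mono[of G t p k] by blast
    then have "Suc (card (?R \<inter> C)) \<le> card (?R' \<inter> C)"
      using uv(4) card_mono[of "?R' \<inter> C" "insert v (?R \<inter> C)"] by simp
    with IH show ?thesis by simp
  qed
qed

lemma stable_scc_subset_causal_reach:
  fixes G :: "nat \<Rightarrow> ('p::finite \<times> 'p) set"
  assumes "vertex_stable_scc G r s C" and "p \<in> C"
    and "\<forall>i<card C - 1. t + i \<in> {r..s}"
  shows "C \<subseteq> causal_reach G t p (card C - 1)"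
proof -
  have "card C \<le> card (causal_reach G t p (card C - 1) \<inter> C)"
    using card_causal_reach_inter_stable_scc[OF assms] by simp
  then have "causal_reach G t p (card C - 1) \<inter> C = C"
    by (intro card_seteq) auto
  then show ?thesis by blast
qed

lemma causal_diam_at_stable_scc_le:
  fixes G :: "nat \<Rightarrow> ('p::finite \<times> 'p) set"
  assumes stable: "vertex_stable_scc G r s C" and "card C \<ge> 2"
    and rounds: "\<forall>i<card C - 1. x + i \<in> {r..s}"
  shows "causal_diam_at G x C \<le> enat (card C - 1)"
proof -
  have dists: "{causal_dist G x p q | p q. p \<in> C \<and> q \<in> C} = (\<lambda>(p, q). causal_dist G x p q) ` (C \<times> C)"
    by auto
  have "C \<noteq> {}"
    using \<open>card C \<ge> 2\<close> by auto
  moreover have "causal_dist G x p q \<le> enat (card C - 1)" if "p \<in> C" "q \<in> C" for p q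
    using stable_scc_subset_causal_reach[OF stable \<open>p \<in> C\<close> rounds] \<open>q \<in> C\<close> \<open>card C \<ge> 2\<close>
    by (intro causal_dist_le_if_causal_reach) auto
  ultimately show ?thesis
    unfolding causal_diam_at_def dists by (auto simp: Max_le_iff)
qed

lemma causal_diam_leI:
  assumes "x\<^sub>0 \<in> {r..s}" and "enat x\<^sub>0 + causal_diam_at G x\<^sub>0 C \<le> enat s + 1"
    and "\<And>x. x \<in> {r..s} \<Longrightarrow> enat x + causal_diam_at G x C \<le> enat s + 1 \<Longrightarrow> causal_diam_at G x C \<le> b"
  shows "causal_diam G r s C \<le> b"
proof -
  let ?S = "{causal_diam_at G x C | x. x \<in> {r..s} \<and> enat x + causal_diam_at G x C \<le> enat s + 1}"
  have "?S \<subseteq> (\<lambda>x. causal_diam_at G x C) ` {r..s}"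
    by auto
  then have "finite ?S"
    by (rule finite_subset) simp
  moreover have "?S \<noteq> {}"
    using assms(1,2) by blast
  ultimately show ?thesis
    unfolding causal_diam_def Let_def using assms(3) by (auto simp: Max_le_iff)
qed

theorem lemma2:
  fixes G :: "nat \<Rightarrow> ('p::finite \<times> 'p) set"
    and r s :: nat and C :: "'p set"
  assumes "card (UNIV :: 'p set) \<ge> 2"
    and "\<forall>t p. (p, p) \<notin> G t"
    and "r \<ge> 1"
    and "s \<ge> r"
    and "vertex_stable_scc G r s C"
    and "card C \<ge> 2"
    and "s \<ge> r + card C - 2"
  shows "causal_diam G r s C \<le> enat (card C - 1)"
proof (rule causal_diam_leI)
  have "causal_diam_at G r C \<le> enat (card C - 1)"
    using assms(6,7) by (intro causal_diam_at_stable_scc_le[OF assms(5,6)]) auto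
  then have "enat r + causal_diam_at G r C \<le> enat (r + (card C - 1))"
    using add_left_mono[of _ _ "enat r"] by fastforce
  also have "\<dots> \<le> enat s + 1"
    using assms(6,7) by (simp add: one_enat_def)
  finally show "enat r + causal_diam_at G r C \<le> enat s + 1" .
  show "r \<in> {r..s}"
    using assms(4) by simp
next
  fix x assume x: "x \<in> {r..s}" and admissible: "enat x + causal_diam_at G x C \<le> enat s + 1"
  show "causal_diam_at G x C \<le> enat (card C - 1)"
  proof (cases "x + card C - 2 \<le> s")
    case True
    with x assms(6) show ?thesis
      by (intro causal_diam_at_stable_scc_le[OF assms(5,6)]) auto
  next
    case False
    with admissible assms(6) show ?thesis
      by (cases "causal_diam_at G x C") (auto simp: one_enat_def)
  qed
qed

end
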